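(* Let $f_\bullet\colon X\to Z$ be a set mapping between finite metric spaces, $V=\mathrm{PH}_0(X)$, $U=\mathrm{PH}_0(Z)$, $f_0\colon V_0\to U_0$ the induced linear map, and set $A^\pm=f_0(\ker^\pm_a(V))$ and $B^\pm=\ker^\pm_b(U)$. Then for all $a\in S^V$ and $b\in S^U$, $$\mathcal{M}^0_f(a,b)=\dim\left(\frac{A^++B^-}{A^-+B^-}\cap\frac{A^-+B^+}{A^-+B^-}\right),$$ where both quotients are regarded as subspaces of $U_0/(A^-+B^-)$.
   Context: All vector spaces are over $\mathbb{Z}_2$. For a finite metric space $(X,d^X)$ and $r\ge 0$, $\mathrm{VR}_r(X)$ is the graph on $X$ with edges $[x,y]$ whenever $d^X(x,y)\le r$; $\mathrm{PH}_0(X)$ is the persistence module $r\mapsto H_0(\mathrm{VR}_r(X))$ (vector space freely generated by connected components) with structure maps $\rho_{rs}$ induced by inclusion, so $\mathrm{PH}_0(X)_0$ has basis $X$. Its barcode is the multiset $(S^V,m^V)$ of finite death values $b>0$ of the bars $[0,b)$ in its interval decomposition (infinite bar excluded). For a persistence module $U$ and $b>0$: $\ker^+_b(U)=\ker(\rho^U_{0b})$, $\ker^-_b(U)=\bigcup_{0\le r<b}\ker(\rho^U_{0r})$. The linear map $f_0$ sends basis element $x$ to $f_\bullet(x)$. The block function is $\mathcal{M}^0_f(a,b)=\dim\frac{f_0(\ker^+_a V)\cap \ker^+_b U}{f_0(\ker^-_a V)\cap\ker^+_b U+f_0(\ker^+_a V)\cap \ker^-_b U}$. *)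

theory Defs
  imports Complex_Main "HOL-Library.Z2" "HOL-Library.Function_Algebras"
begin

text \<open>A finite metric space is a finite type 'x together with a metric d.\<close>

definition is_metric :: "('x \<Rightarrow> 'x \<Rightarrow> real) \<Rightarrow> bool" where
  "is_metric d \<longleftrightarrow> (\<forall>x y. 0 \<le> d x y) \<and> (\<forall>x y. d x y = 0 \<longleftrightarrow> x = y)
     \<and> (\<forall>x y. d x y = d y x) \<and> (\<forall>x y z. d x z \<le> d x y + d y z)"

text \<open>The Z2-vector space with basis 'x is the type 'x => bit (pointwise operations).\<close>

definition zscale :: "bit \<Rightarrow> ('x \<Rightarrow> bit) \<Rightarrow> ('x \<Rightarrow> bit)" where
  "zscale c v = (\<lambda>x. c * v x)"

definition dimZ2 :: "('x \<Rightarrow> bit) set \<Rightarrow> nat" where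
  "dimZ2 S = vector_space.dim zscale S"

definition ssum :: "('x \<Rightarrow> bit) set \<Rightarrow> ('x \<Rightarrow> bit) set \<Rightarrow> ('x \<Rightarrow> bit) set" where
  "ssum A B = {a + b | a b. a \<in> A \<and> b \<in> B}"

text \<open>Quotients: the coset of v modulo C, the image of W in the quotient U/C,
  and the dimension of a subspace S of the quotient U/C (via its preimage:
  dim S = dim (q^{-1} S) - dim C).\<close>
definition coset :: "('x \<Rightarrow> bit) set \<Rightarrow> ('x \<Rightarrow> bit) \<Rightarrow> ('x \<Rightarrow> bit) set" where
  "coset C v = (\<lambda>c. v + c) ` C"

definition quot_sub :: "('x \<Rightarrow> bit) set \<Rightarrow> ('x \<Rightarrow> bit) set \<Rightarrow> ('x \<Rightarrow> bit) set set" where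
  "quot_sub W C = coset C ` W"

definition dim_quot :: "('x \<Rightarrow> bit) set set \<Rightarrow> ('x \<Rightarrow> bit) set \<Rightarrow> nat" where
  "dim_quot S C = dimZ2 {v. coset C v \<in> S} - dimZ2 C"

definition vr_edges :: "('x \<Rightarrow> 'x \<Rightarrow> real) \<Rightarrow> real \<Rightarrow> ('x \<times> 'x) set" where
  "vr_edges d r = {(x, y). d x y \<le> r}"

definition components :: "('x \<Rightarrow> 'x \<Rightarrow> real) \<Rightarrow> real \<Rightarrow> 'x set set" where
  "components d r = UNIV // ((vr_edges d r \<union> (vr_edges d r)\<inverse>)\<^sup>*)"

text \<open>PH_0(X)_r = Z2-space on the components, i.e. functions 'x set => bit supported on
  components d r; the structure map rho_{0r} sends a basis point to its component.\<close>
definition rho0 :: "('x \<Rightarrow> 'x \<Rightarrow> real) \<Rightarrow> real \<Rightarrow> ('x \<Rightarrow> bit) \<Rightarrow> ('x set \<Rightarrow> bit)" where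
  "rho0 d r v = (\<lambda>K. if K \<in> components d r then (\<Sum>x\<in>K. v x) else 0)"

definition ker_plus :: "('x \<Rightarrow> 'x \<Rightarrow> real) \<Rightarrow> real \<Rightarrow> ('x \<Rightarrow> bit) set" where
  "ker_plus d b = {v. rho0 d b v = 0}"

definition ker_minus :: "('x \<Rightarrow> 'x \<Rightarrow> real) \<Rightarrow> real \<Rightarrow> ('x \<Rightarrow> bit) set" where
  "ker_minus d b = (\<Union>r\<in>{r. 0 \<le> r \<and> r < b}. {v. rho0 d r v = 0})"

text \<open>Barcode (set of finite death values) of PH_0(X): all bars are born at 0, and
  dim PH_0(X)_r = number of components of VR_r(X) = number of bars alive at r,
  so b > 0 is a finite death value iff the number of components drops at b.\<close>
definition barcode :: "('x \<Rightarrow> 'x \<Rightarrow> real) \<Rightarrow> real set" where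
  "barcode d = {b. 0 < b \<and> (\<forall>s. 0 \<le> s \<and> s < b \<longrightarrow> card (components d b) < card (components d s))}"

definition lin0 :: "('x \<Rightarrow> 'z) \<Rightarrow> ('x \<Rightarrow> bit) \<Rightarrow> ('z \<Rightarrow> bit)" where
  "lin0 f v = (\<lambda>z. \<Sum>x\<in>{x. f x = z}. v x)"

definition block0 :: "('x \<Rightarrow> 'x \<Rightarrow> real) \<Rightarrow> ('z \<Rightarrow> 'z \<Rightarrow> real) \<Rightarrow> ('x \<Rightarrow> 'z)
    \<Rightarrow> real \<Rightarrow> real \<Rightarrow> nat" where
  "block0 dX dZ f a b =
     (let N = lin0 f ` ker_plus dX a \<inter> ker_plus dZ b;
          D = ssum (lin0 f ` ker_minus dX a \<inter> ker_plus dZ b)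
                   (lin0 f ` ker_plus dX a \<inter> ker_minus dZ b)
      in dim_quot (quot_sub N D) D)"

end

theory Submission
  imports Defs "HOL-Library.Set_Algebras"
begin

(* Write N = A+ \<inter> B+, D = (A- \<inter> B+) + (A+ \<inter> B-) and C = A- + B-, so that the block
   function is dim N - dim D. The two quotients on the right are images of subspaces
   containing C, hence their intersection is the image of (A+ + B-) \<inter> (A- + B+), which by
   the modular law is C + N; the modular law also gives C \<inter> N = D, and
   dim (C + N) + dim (C \<inter> N) = dim C + dim N finishes the count.
   Persistence enters only through A- \<subseteq> A+ and B- \<subseteq> B+ being subspaces: ker- is a directed
   union of the kernels of rho_0r, which grow with r because every component of VR_s is a
   union of components of VR_r for r \<le> s. *)

lemma set_plus_eq_sums: "A + B = {a + b |a b. a \<in> A \<and> b \<in> B}"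
  by (auto simp: set_plus_def)

context module
begin

lemma set_plus_Int_set_plus_eq:
  assumes "subspace Ap" "subspace Am" "subspace Bp" "subspace Bm"
    and "Am \<subseteq> Ap" "Bm \<subseteq> Bp"
  shows "(Ap + Bm) \<inter> (Am + Bp) = (Am + Bm) + (Ap \<inter> Bp)"
proof (intro equalityI subsetI)
  fix v assume "v \<in> (Ap + Bm) \<inter> (Am + Bp)"
  then obtain p m m' q
    where "p \<in> Ap" "m \<in> Bm" "v = p + m" "m' \<in> Am" "q \<in> Bp" "v = m' + q"
    by (auto elim!: set_plus_elim)
  then have "p - m' \<in> Ap" and "p - m' = q - m"
    using assms by (auto intro: subspace_diff simp: algebra_simps)
  moreover have "q - m \<in> Bp"
    using \<open>q \<in> Bp\<close> \<open>m \<in> Bm\<close> assms by (auto intro: subspace_diff)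
  moreover have "v = (m' + m) + (p - m')"
    using \<open>v = p + m\<close> by (simp add: algebra_simps)
  moreover have "m' + m \<in> Am + Bm"
    using \<open>m' \<in> Am\<close> \<open>m \<in> Bm\<close> by (rule set_plus_intro)
  ultimately show "v \<in> (Am + Bm) + (Ap \<inter> Bp)"
    by (metis IntI set_plus_intro)
next
  fix v assume "v \<in> (Am + Bm) + (Ap \<inter> Bp)"
  then obtain m' m n where "m' \<in> Am" "m \<in> Bm" "n \<in> Ap" "n \<in> Bp" "v = (m' + m) + n"
    by (auto elim!: set_plus_elim)
  then have "m' + n \<in> Ap" "m + n \<in> Bp" "v = (m' + n) + m" "v = m' + (m + n)"
    using assms by (auto intro: subspace_add simp: algebra_simps)
  then show "v \<in> (Ap + Bm) \<inter> (Am + Bp)"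
    using \<open>m' \<in> Am\<close> \<open>m \<in> Bm\<close> by (metis IntI set_plus_intro)
qed

lemma set_plus_Int_Int_eq:
  assumes "subspace Ap" "subspace Bp" and "Am \<subseteq> Ap" "Bm \<subseteq> Bp"
  shows "(Am + Bm) \<inter> (Ap \<inter> Bp) = (Am \<inter> Bp) + (Ap \<inter> Bm)"
proof (intro equalityI subsetI)
  fix v assume v: "v \<in> (Am + Bm) \<inter> (Ap \<inter> Bp)"
  then obtain m' m where "m' \<in> Am" "m \<in> Bm" "v = m' + m"
    by (auto elim!: set_plus_elim)
  moreover have "m = v - m'" "m' = v - m"
    using \<open>v = m' + m\<close> by (simp_all add: algebra_simps)
  ultimately have "m \<in> Ap" "m' \<in> Bp"
    using v assms by (metis IntE subsetD subspace_diff)+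
  then show "v \<in> (Am \<inter> Bp) + (Ap \<inter> Bm)"
    using \<open>m' \<in> Am\<close> \<open>m \<in> Bm\<close> \<open>v = m' + m\<close> by auto
next
  fix v assume "v \<in> (Am \<inter> Bp) + (Ap \<inter> Bm)"
  then obtain x y where "x \<in> Am" "x \<in> Bp" "y \<in> Ap" "y \<in> Bm" "v = x + y"
    by (auto elim!: set_plus_elim)
  then show "v \<in> (Am + Bm) \<inter> (Ap \<inter> Bp)"
    using assms by (auto intro: subspace_add)
qed

end

lemma (in vector_space) subspace_set_plus:
  "subspace A \<Longrightarrow> subspace B \<Longrightarrow> subspace (A + B)"
  unfolding set_plus_eq_sums by (rule subspace_sums)

lemma (in finite_dimensional_vector_space) dim_block_eq_dim_sums_Int:
  assumes "subspace Ap" "subspace Am" "subspace Bp" "subspace Bm"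
    and "Am \<subseteq> Ap" "Bm \<subseteq> Bp"
  shows "dim (Ap \<inter> Bp) - dim ((Am \<inter> Bp) + (Ap \<inter> Bm))
    = dim ((Ap + Bm) \<inter> (Am + Bp)) - dim (Am + Bm)"
proof -
  have "subspace (Am + Bm)" "subspace (Ap \<inter> Bp)"
    using assms by (simp_all add: subspace_set_plus subspace_inter)
  from dim_sums_Int[OF this, folded set_plus_eq_sums]
  have "dim ((Am + Bm) + (Ap \<inter> Bp)) + dim ((Am + Bm) \<inter> (Ap \<inter> Bp))
      = dim (Am + Bm) + dim (Ap \<inter> Bp)" .
  then show ?thesis
    using set_plus_Int_set_plus_eq[OF assms] set_plus_Int_Int_eq[of Ap Bp Am Bm] assms by simp
qed

lemma vector_space_zscale: "vector_space zscale"
  by unfold_locales (simp_all only: zscale_def plus_fun_def ring_distribs mult.assoc mult_1_left)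

interpretation zvec: vector_space "zscale :: bit \<Rightarrow> ('x \<Rightarrow> bit) \<Rightarrow> 'x \<Rightarrow> bit"
  by (rule vector_space_zscale)

lemma zvec_subspace_iff:
  "zvec.subspace (S :: ('x \<Rightarrow> bit) set) \<longleftrightarrow> 0 \<in> S \<and> (\<forall>u\<in>S. \<forall>v\<in>S. u + v \<in> S)"
proof -
  have "zscale 0 v = 0" "zscale 1 v = v" for v :: "'x \<Rightarrow> bit"
    by (simp_all add: zscale_def fun_eq_iff)
  then have "zscale c v \<in> S" if "0 \<in> S" "v \<in> S" for c v
    using that by (cases c) simp_all
  then show ?thesis
    unfolding zvec.subspace_def by blast
qed

lemma finite_UNIV_bit_fun: "finite (UNIV :: ('x::finite \<Rightarrow> bit) set)"
proof -
  have "(UNIV :: bit set) = {0, 1}"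
    using bit.exhaust by blast
  then have "finite (UNIV :: bit set)"
    by (metis finite.emptyI finite_insert)
  then show ?thesis
    using finite_set_of_finite_funs[of "UNIV :: 'x set" "UNIV :: bit set" undefined] by simp
qed

lemma finite_dimensional_zscale:
  obtains Basis
  where "finite_dimensional_vector_space (zscale :: bit \<Rightarrow> ('x::finite \<Rightarrow> bit) \<Rightarrow> _) Basis"
proof -
  obtain B :: "('x \<Rightarrow> bit) set" where "zvec.independent B" "UNIV \<subseteq> zvec.span B"
    using zvec.basis_exists[of UNIV] by metis
  then show thesis
    using finite_subset[OF subset_UNIV finite_UNIV_bit_fun] by (intro that, unfold_locales) auto
qed

lemma ssum_eq_set_plus: "ssum A B = A + B"
  by (simp add: ssum_def set_plus_eq_sums)

lemma coset_in_quot_sub_iff: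
  assumes "zvec.subspace W" "zvec.subspace C" "C \<subseteq> W"
  shows "coset C v \<in> quot_sub W C \<longleftrightarrow> v \<in> W"
proof
  assume "coset C v \<in> quot_sub W C"
  then obtain w where "w \<in> W" "coset C v = coset C w"
    by (auto simp: quot_sub_def)
  moreover have "v \<in> coset C v"
    using zvec.subspace_0[OF assms(2)] by (force simp: coset_def)
  ultimately obtain c where "c \<in> C" "v = w + c"
    by (auto simp: coset_def)
  then show "v \<in> W"
    using assms(3) zvec.subspace_add[OF assms(1) \<open>w \<in> W\<close>] by blast
qed (simp add: quot_sub_def)

lemma dim_quot_quot_sub:
  assumes "zvec.subspace W" "zvec.subspace C" "C \<subseteq> W"
  shows "dim_quot (quot_sub W C) C = dimZ2 W - dimZ2 C"
  using coset_in_quot_sub_iff[OF assms] by (simp add: dim_quot_def)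

lemma dim_quot_Int_quot_sub:
  assumes "zvec.subspace W" "zvec.subspace W'" "zvec.subspace C" "C \<subseteq> W" "C \<subseteq> W'"
  shows "dim_quot (quot_sub W C \<inter> quot_sub W' C) C = dimZ2 (W \<inter> W') - dimZ2 C"
proof -
  have "{v. coset C v \<in> quot_sub W C \<inter> quot_sub W' C} = W \<inter> W'"
    using coset_in_quot_sub_iff[of W C] coset_in_quot_sub_iff[of W' C] assms by blast
  then show ?thesis
    by (simp add: dim_quot_def)
qed

lemma dim_quot_block_eq_dim_quot_Int:
  fixes Ap Am Bp Bm :: "('x::finite \<Rightarrow> bit) set"
  assumes "zvec.subspace Ap" "zvec.subspace Am" "zvec.subspace Bp" "zvec.subspace Bm"
    and "Am \<subseteq> Ap" "Bm \<subseteq> Bp"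
  shows "dim_quot (quot_sub (Ap \<inter> Bp) (ssum (Am \<inter> Bp) (Ap \<inter> Bm)))
             (ssum (Am \<inter> Bp) (Ap \<inter> Bm))
    = dim_quot (quot_sub (ssum Ap Bm) (ssum Am Bm) \<inter> quot_sub (ssum Am Bp) (ssum Am Bm))
        (ssum Am Bm)"
proof -
  obtain Basis where "finite_dimensional_vector_space (zscale :: bit \<Rightarrow> ('x \<Rightarrow> bit) \<Rightarrow> _) Basis"
    by (rule finite_dimensional_zscale)
  then interpret fd: finite_dimensional_vector_space zscale Basis .
  have subspaces: "zvec.subspace (Ap \<inter> Bp)" "zvec.subspace ((Am \<inter> Bp) + (Ap \<inter> Bm))"
    "zvec.subspace (Ap + Bm)" "zvec.subspace (Am + Bp)" "zvec.subspace (Am + Bm)"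
    using assms by (simp_all add: zvec.subspace_set_plus zvec.subspace_inter)
  have "(Am \<inter> Bp) + (Ap \<inter> Bm) \<subseteq> Ap \<inter> Bp"
    using assms zvec.set_plus_Int_Int_eq[of Ap Bp Am Bm] by auto
  then have "dim_quot (quot_sub (Ap \<inter> Bp) ((Am \<inter> Bp) + (Ap \<inter> Bm)))
               ((Am \<inter> Bp) + (Ap \<inter> Bm))
      = dimZ2 (Ap \<inter> Bp) - dimZ2 ((Am \<inter> Bp) + (Ap \<inter> Bm))"
    using subspaces by (intro dim_quot_quot_sub)
  also have "\<dots> = dimZ2 ((Ap + Bm) \<inter> (Am + Bp)) - dimZ2 (Am + Bm)"
    unfolding dimZ2_def by (rule fd.dim_block_eq_dim_sums_Int[OF assms])
  also have "\<dots>
      = dim_quot (quot_sub (Ap + Bm) (Am + Bm) \<inter> quot_sub (Am + Bp) (Am + Bm)) (Am + Bm)"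
    using subspaces assms by (intro dim_quot_Int_quot_sub[symmetric]) (simp_all add: set_plus_mono2)
  finally show ?thesis
    unfolding ssum_eq_set_plus .
qed

lemma rho0_add: "rho0 d r (v + w) = rho0 d r v + rho0 d r w"
proof (rule ext)
  fix K
  show "rho0 d r (v + w) K = (rho0 d r v + rho0 d r w) K"
    by (cases "K \<in> components d r")
      (simp_all only: rho0_def plus_fun_def sum.distrib if_True if_False add_0_left)
qed

lemma rho0_zero [simp]: "rho0 d r 0 = 0"
  by (rule ext) (simp add: rho0_def)

lemma lin0_add: "lin0 f (v + w) = lin0 f v + lin0 f w"
  by (rule ext) (simp only: lin0_def plus_fun_def sum.distrib)

lemma lin0_zero [simp]: "lin0 f 0 = 0"
  by (rule ext) (simp add: lin0_def)

lemma subspace_lin0_image: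
  assumes "zvec.subspace S"
  shows "zvec.subspace (lin0 f ` S)"
proof -
  have "0 \<in> lin0 f ` S"
    using zvec.subspace_0[OF assms] by (metis imageI lin0_zero)
  moreover have "lin0 f u + lin0 f v \<in> lin0 f ` S" if "u \<in> S" "v \<in> S" for u v
    using zvec.subspace_add[OF assms that] by (metis imageI lin0_add)
  ultimately show ?thesis
    unfolding zvec_subspace_iff by blast
qed

lemma subspace_ker_plus: "zvec.subspace (ker_plus d r)"
  unfolding zvec_subspace_iff ker_plus_def by (simp add: rho0_add)

lemma equiv_vr_connected: "equiv UNIV ((vr_edges d r \<union> (vr_edges d r)\<inverse>)\<^sup>*)"
  unfolding equiv_def
  using refl_rtrancl[of "vr_edges d r \<union> (vr_edges d r)\<inverse>"]
    sym_rtrancl[OF sym_Un_converse[of "vr_edges d r"]]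
    trans_rtrancl[of "vr_edges d r \<union> (vr_edges d r)\<inverse>"] by simp

lemma vr_connected_mono:
  "r \<le> s \<Longrightarrow> (vr_edges d r \<union> (vr_edges d r)\<inverse>)\<^sup>* \<subseteq> (vr_edges d s \<union> (vr_edges d s)\<inverse>)\<^sup>*"
  by (intro rtrancl_mono) (auto simp: vr_edges_def)

lemma component_eq_Union_components:
  assumes "r \<le> s" "K \<in> components d s"
  shows "K = \<Union>{K' \<in> components d r. K' \<subseteq> K}"
proof (rule equalityI; rule subsetI)
  let ?R = "(vr_edges d r \<union> (vr_edges d r)\<inverse>)\<^sup>*"
  let ?S = "(vr_edges d s \<union> (vr_edges d s)\<inverse>)\<^sup>*"
  fix x assume "x \<in> K"
  obtain y where K: "K = ?S `` {y}"
    using assms(2) unfolding components_def by (rule quotientE)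
  then have "(y, x) \<in> ?S"
    using \<open>x \<in> K\<close> by simp
  then have "K = ?S `` {x}"
    unfolding K by (rule equiv_class_eq[OF equiv_vr_connected])
  moreover have "?R `` {x} \<subseteq> ?S `` {x}"
    by (rule Image_mono[OF vr_connected_mono[OF assms(1)] subset_refl])
  ultimately have "?R `` {x} \<subseteq> K"
    by simp
  moreover have "?R `` {x} \<in> components d r"
    unfolding components_def by (rule quotientI) simp
  moreover have "x \<in> ?R `` {x}"
    by simp
  ultimately show "x \<in> \<Union>{K' \<in> components d r. K' \<subseteq> K}"
    by blast
qed blast

lemma rho0_eq_0_mono:
  fixes d :: "'x::finite \<Rightarrow> 'x \<Rightarrow> real"
  assumes "r \<le> s" "rho0 d r v = 0"
  shows "rho0 d s v = 0"
proof (rule ext)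
  fix K
  show "rho0 d s v K = 0 K"
  proof (cases "K \<in> components d s")
    case True
    let ?P = "{K' \<in> components d r. K' \<subseteq> K}"
    have "\<forall>A\<in>?P. \<forall>B\<in>?P. A \<noteq> B \<longrightarrow> A \<inter> B = {}"
      using quotient_disj[OF equiv_vr_connected[of d r]] unfolding components_def by blast
    then have "(\<Sum>x\<in>K. v x) = (\<Sum>K'\<in>?P. \<Sum>x\<in>K'. v x)"
      using sum.Union_disjoint[of ?P v] component_eq_Union_components[OF assms(1) True] by simp
    also have "\<dots> = 0"
    proof (rule sum.neutral, safe)
      fix K' assume "K' \<in> components d r"
      then show "(\<Sum>x\<in>K'. v x) = 0"
        using fun_cong[OF assms(2), of K'] by (simp add: rho0_def)
    qed
    finally show ?thesis
      using True by (simp add: rho0_def)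
  qed (simp add: rho0_def)
qed

lemma ker_minus_subset_ker_plus: "ker_minus d b \<subseteq> ker_plus (d :: 'x::finite \<Rightarrow> _) b"
proof
  fix v assume "v \<in> ker_minus d b"
  then obtain r where "r < b" "rho0 d r v = 0"
    by (auto simp: ker_minus_def)
  then show "v \<in> ker_plus d b"
    by (simp add: ker_plus_def rho0_eq_0_mono[of r b])
qed

lemma subspace_ker_minus:
  fixes d :: "'x::finite \<Rightarrow> 'x \<Rightarrow> real"
  assumes "0 < b"
  shows "zvec.subspace (ker_minus d b)"
  unfolding zvec_subspace_iff
proof (intro conjI ballI)
  show "0 \<in> ker_minus d b"
    using assms by (auto simp: ker_minus_def)
next
  fix u v assume "u \<in> ker_minus d b" "v \<in> ker_minus d b"
  then obtain r1 r2
    where "0 \<le> r1" "r1 < b" "rho0 d r1 u = 0" "0 \<le> r2" "r2 < b" "rho0 d r2 v = 0"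
    by (auto simp: ker_minus_def)
  then have "rho0 d (max r1 r2) (u + v) = 0"
    using rho0_eq_0_mono[of r1 "max r1 r2" d u] rho0_eq_0_mono[of r2 "max r1 r2" d v]
    by (simp add: rho0_add)
  then show "u + v \<in> ker_minus d b"
    unfolding ker_minus_def using \<open>0 \<le> r1\<close> \<open>r1 < b\<close> \<open>r2 < b\<close>
    by (intro UN_I[of "max r1 r2"]) auto
qed

theorem lemma3p4:
  fixes dX :: "'x::finite \<Rightarrow> 'x \<Rightarrow> real" and dZ :: "'z::finite \<Rightarrow> 'z \<Rightarrow> real"
    and f :: "'x \<Rightarrow> 'z" and a b :: real
  assumes "is_metric dX" and "is_metric dZ"
    and "a \<in> barcode dX" and "b \<in> barcode dZ"
  shows "block0 dX dZ f a b =
    (let Ap = lin0 f ` ker_plus dX a; Am = lin0 f ` ker_minus dX a;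
         Bp = ker_plus dZ b; Bm = ker_minus dZ b;
         C = ssum Am Bm
     in dim_quot (quot_sub (ssum Ap Bm) C \<inter> quot_sub (ssum Am Bp) C) C)"
proof -
  have "0 < a" "0 < b"
    using assms(3,4) by (simp_all add: barcode_def)
  then show ?thesis
    unfolding block0_def Let_def
    by (intro dim_quot_block_eq_dim_quot_Int subspace_lin0_image subspace_ker_plus
        subspace_ker_minus image_mono ker_minus_subset_ker_plus)
qed

end
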